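(* For every integer $n\ge 3$, if $T$ is a standard Young tableau of shape $(n,n)$ chosen uniformly at random, then $$SP\big((n,n),[1,3],[2,1]\big)=\Pr(T_{1,3}>T_{2,1})-\Pr(T_{2,1}>T_{1,3})=\frac{3}{2n-1}=\frac{3}{2}\cdot\frac1n+\frac34\cdot\frac1{n^2}+\frac38\cdot\frac1{n^3}+O\!\left(\frac1{n^4}\right).$$ Consequently, the minimum over all pairs of cells $c_1,c_2$ of the shape $(n,n)$ of $|SP((n,n),c_1,c_2)|$ is $O(1/n)$ as $n\to\infty$.
   Context: A partition (shape) $\lambda=(\lambda_1,\dots,\lambda_k)$ with $\lambda_1\ge\dots\ge\lambda_k>0$ is identified with its Young diagram, the set of cells $[i,j]$ with $1\le i\le k$ and $1\le j\le\lambda_i$ (row $i$, column $j$). A standard Young tableau of shape $\lambda$ with $N=\sum\lambda_i$ cells is a bijective filling $T$ of the cells by $\{1,\dots,N\}$ with $T_{i,j}<T_{i,j+1}$ and $T_{i,j}<T_{i+1,j}$ whenever these cells exist. For cells $c_1,c_2$ of $\lambda$, the sorting probability is $SP(\lambda,c_1,c_2)=\Pr(T_{c_1}>T_{c_2})-\Pr(T_{c_2}>T_{c_1})=2\Pr(T_{c_1}>T_{c_2})-1$, where $T$ is uniformly random among standard Young tableaux of shape $\lambda$. *)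

theory Defs
  imports Complex_Main "HOL-Library.Landau_Symbols"
begin

text \<open>A partition is a list of positive parts in weakly decreasing order; its Young
diagram is the set of cells (i,j) with 1 \<le> i \<le> number of parts and 1 \<le> j \<le> lambda_i
(rows and columns are 1-indexed).\<close>

definition young_diagram :: "nat list \<Rightarrow> (nat \<times> nat) set" where
  "young_diagram lam = {(i, j). 1 \<le> i \<and> i \<le> length lam \<and> 1 \<le> j \<and> j \<le> lam ! (i - 1)}"

text \<open>Standard Young tableaux of shape lam, represented as functions on cells,
with value 0 outside the diagram (to make the set of tableaux finite).\<close>

definition SYT :: "nat list \<Rightarrow> ((nat \<times> nat) \<Rightarrow> nat) set" where
  "SYT lam = {T. bij_betw T (young_diagram lam) {1..sum_list lam}
              \<and> (\<forall>c. c \<notin> young_diagram lam \<longrightarrow> T c = 0)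
              \<and> (\<forall>i j. (i, j) \<in> young_diagram lam \<and> (i, j + 1) \<in> young_diagram lam
                        \<longrightarrow> T (i, j) < T (i, j + 1))
              \<and> (\<forall>i j. (i, j) \<in> young_diagram lam \<and> (i + 1, j) \<in> young_diagram lam
                        \<longrightarrow> T (i, j) < T (i + 1, j))}"

definition SP :: "nat list \<Rightarrow> nat \<times> nat \<Rightarrow> nat \<times> nat \<Rightarrow> real" where
  "SP lam c1 c2 =
     (real (card {T \<in> SYT lam. T c1 > T c2}) - real (card {T \<in> SYT lam. T c2 > T c1}))
     / real (card (SYT lam))"

end

theory Submission
  imports Defs
begin

text \<open>
  Deleting the cell that holds the largest entry of a standard Young tableau of two-row shape
  (a, b) leaves a tableau of shape (a - 1, b) or (a, b - 1). Hence the number of tableaux of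
  shape (a, b), and the number of those whose first row begins with 1, 2, 3, satisfy the same
  recursion as the reflection-principle counts C(a+b-s, b) - C(a+b-s, b-s-1) with s = 0 and
  s = 3, and agree with them. For the shape (n, n), the entry at (1,3) is smaller than the one
  at (2,1) exactly when the first row begins with 1, 2, 3 (an entry equals the number of cells
  whose entries do not exceed it). The binomial formulas give this event the probability
  (n - 2) / (2n - 1), so SP = 1 - 2(n - 2) / (2n - 1) = 3 / (2n - 1). The expansion is the
  identity 3/(2n-1) - 3/(2n) - 3/(4n^2) - 3/(8n^3) = 3/(8n^3(2n-1)), and the minimum over all
  pairs of cells is at most the value for the pair (1,3), (2,1).
\<close>

section \<open>Standard fillings of cell sets\<close>

text \<open>Standard fillings generalise SYT from Young diagrams to arbitrary cell sets D, so that
  deleting the cell of the largest entry stays within the notion.\<close>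

definition standard_fillings :: "(nat \<times> nat) set \<Rightarrow> nat \<Rightarrow> ((nat \<times> nat) \<Rightarrow> nat) set" where
  "standard_fillings D N = {T. bij_betw T D {1..N}
     \<and> (\<forall>c. c \<notin> D \<longrightarrow> T c = 0)
     \<and> (\<forall>i j. (i, j) \<in> D \<and> (i, j + 1) \<in> D \<longrightarrow> T (i, j) < T (i, j + 1))
     \<and> (\<forall>i j. (i, j) \<in> D \<and> (i + 1, j) \<in> D \<longrightarrow> T (i, j) < T (i + 1, j))}"

lemma SYT_eq_standard_fillings: "SYT lam = standard_fillings (young_diagram lam) (sum_list lam)"
  unfolding SYT_def standard_fillings_def ..

lemma standard_fillings_range:
  "T \<in> standard_fillings D N \<Longrightarrow> c \<in> D \<Longrightarrow> T c \<in> {1..N}"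
  unfolding standard_fillings_def bij_betw_def by blast

lemma standard_fillings_outside:
  "T \<in> standard_fillings D N \<Longrightarrow> c \<notin> D \<Longrightarrow> T c = 0"
  unfolding standard_fillings_def by blast

lemma standard_fillings_inj_on:
  "T \<in> standard_fillings D N \<Longrightarrow> inj_on T D"
  unfolding standard_fillings_def bij_betw_def by blast

lemma standard_fillings_right_step:
  "T \<in> standard_fillings D N \<Longrightarrow> (i, j) \<in> D \<Longrightarrow> (i, j + 1) \<in> D \<Longrightarrow> T (i, j) < T (i, j + 1)"
  unfolding standard_fillings_def by blast

lemma standard_fillings_down_step:
  "T \<in> standard_fillings D N \<Longrightarrow> (i, j) \<in> D \<Longrightarrow> (i + 1, j) \<in> D \<Longrightarrow> T (i, j) < T (i + 1, j)"
  unfolding standard_fillings_def by blast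

lemma standard_fillings_row_less:
  assumes T: "T \<in> standard_fillings D N" and "j < k"
    and row: "\<And>l. j \<le> l \<Longrightarrow> l \<le> k \<Longrightarrow> (i, l) \<in> D"
  shows "T (i, j) < T (i, k)"
  using assms(2) row
proof (induction k)
  case (Suc k)
  have "T (i, k) < T (i, Suc k)"
    using standard_fillings_right_step[OF T] Suc.prems by simp
  moreover have "T (i, j) \<le> T (i, k)"
    using Suc by (cases "j = k") auto
  ultimately show ?case by simp
qed simp

lemma finite_standard_fillings:
  assumes "finite D" shows "finite (standard_fillings D N)"
proof (rule finite_subset)
  show "standard_fillings D N \<subseteq> {T. \<forall>c. (c \<in> D \<longrightarrow> T c \<in> {1..N}) \<and> (c \<notin> D \<longrightarrow> T c = 0)}"
    using standard_fillings_range standard_fillings_outside by blast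
  show "finite \<dots>"
    using assms by (intro finite_set_of_finite_funs) auto
qed

lemma standard_fillings_max_cell:
  assumes T: "T \<in> standard_fillings D (Suc N)"
  obtains i j where "(i, j) \<in> D" "T (i, j) = Suc N" "(i, j + 1) \<notin> D" "(i + 1, j) \<notin> D"
proof -
  have "Suc N \<in> T ` D"
    using T unfolding standard_fillings_def bij_betw_def by simp
  then obtain i j where ij: "(i, j) \<in> D" "T (i, j) = Suc N" by auto
  have le: "T d \<le> Suc N" if "d \<in> D" for d
    using standard_fillings_range[OF T that] by simp
  have "(i, j + 1) \<notin> D"
    using standard_fillings_right_step[OF T ij(1)] le[of "(i, j + 1)"] ij(2) by linarith
  moreover have "(i + 1, j) \<notin> D"
    using standard_fillings_down_step[OF T ij(1)] le[of "(i + 1, j)"] ij(2) by linarith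
  ultimately show thesis using ij that by blast
qed

lemma standard_fillings_value_eq_card:
  assumes T: "T \<in> standard_fillings D N" and c: "c \<in> D"
  shows "T c = card {d \<in> D. T d \<le> T c}"
proof -
  have bij: "bij_betw T D {1..N}"
    using T by (simp add: standard_fillings_def)
  have "T ` {d \<in> D. T d \<le> T c} = T ` D \<inter> {..T c}"
    by blast
  also have "\<dots> = {1..T c}"
    using bij standard_fillings_range[OF T c] unfolding bij_betw_def by auto
  finally have "card {d \<in> D. T d \<le> T c} = card {1..T c}"
    using bij unfolding bij_betw_def by (metis (no_types, lifting) card_image inj_on_subset mem_Collect_eq subsetI)
  then show ?thesis
    by simp
qed

lemma bij_betw_fun_upd_insert_top:
  assumes "c \<notin> D"
  shows "bij_betw (T(c := Suc N)) (insert c D) {1..Suc N} \<longleftrightarrow> bij_betw T D {1..N}"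
proof -
  have "bij_betw (T(c := Suc N)) (insert c D) {1..Suc N}
      \<longleftrightarrow> bij_betw (T(c := Suc N)) (D \<union> {c}) ({1..N} \<union> {(T(c := Suc N)) c})"
    by (simp add: atLeastAtMostSuc_conv)
  also have "\<dots> \<longleftrightarrow> bij_betw (T(c := Suc N)) D {1..N}"
    using assms by (intro notIn_Un_bij_betw3[symmetric]) auto
  also have "\<dots> \<longleftrightarrow> bij_betw T D {1..N}"
    using assms by (intro bij_betw_cong) auto
  finally show ?thesis .
qed

lemma standard_fillings_extend:
  assumes S: "S \<in> standard_fillings D N"
    and c: "(i, j) \<notin> D" "(i, j + 1) \<notin> D" "(i + 1, j) \<notin> D"
  shows "S((i, j) := Suc N) \<in> standard_fillings (insert (i, j) D) (Suc N)"
    (is "?T \<in> _")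
proof -
  have "bij_betw ?T (insert (i, j) D) {1..Suc N}"
    using S bij_betw_fun_upd_insert_top[OF c(1)] unfolding standard_fillings_def by blast
  moreover have le: "S d \<le> N" if "d \<in> D" for d
    using standard_fillings_range[OF S that] by simp
  moreover have "?T d = 0" if "d \<notin> insert (i, j) D" for d
    using standard_fillings_outside[OF S] that by simp
  moreover have "?T (x, y) < ?T (x, y + 1)"
    if "(x, y) \<in> insert (i, j) D" "(x, y + 1) \<in> insert (i, j) D" for x y
    using that le[of "(x, y)"] standard_fillings_right_step[OF S, of x y] c by (auto simp: less_Suc_eq_le)
  moreover have "?T (x, y) < ?T (x + 1, y)"
    if "(x, y) \<in> insert (i, j) D" "(x + 1, y) \<in> insert (i, j) D" for x y
    using that le[of "(x, y)"] standard_fillings_down_step[OF S, of x y] c by (auto simp: less_Suc_eq_le)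
  ultimately show ?thesis
    unfolding standard_fillings_def by blast
qed

lemma standard_fillings_restrict:
  assumes T: "T \<in> standard_fillings (insert c D) (Suc N)" and c: "c \<notin> D" "T c = Suc N"
  shows "T(c := 0) \<in> standard_fillings D N"
proof -
  have "T = (T(c := 0))(c := Suc N)"
    using c(2) by (simp add: fun_eq_iff)
  then have "bij_betw (T(c := 0)) D {1..N}"
    using T c(1) bij_betw_fun_upd_insert_top[OF c(1), of "T(c := 0)" N]
    by (simp add: standard_fillings_def)
  then show ?thesis
    using T c(1) unfolding standard_fillings_def by auto
qed

lemma card_standard_fillings_max_at:
  assumes c: "(i, j) \<notin> D" "(i, j + 1) \<notin> D" "(i + 1, j) \<notin> D"
  shows "card {T \<in> standard_fillings (insert (i, j) D) (Suc N). T (i, j) = Suc N \<and> P T}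
       = card {S \<in> standard_fillings D N. P (S((i, j) := Suc N))}"
proof -
  let ?ext = "\<lambda>S. S((i, j) := Suc N)"
  have "{T \<in> standard_fillings (insert (i, j) D) (Suc N). T (i, j) = Suc N \<and> P T}
      = ?ext ` {S \<in> standard_fillings D N. P (?ext S)}"
  proof (intro equalityI subsetI)
    fix T
    assume T: "T \<in> {T \<in> standard_fillings (insert (i, j) D) (Suc N). T (i, j) = Suc N \<and> P T}"
    then have "T = ?ext (T((i, j) := 0))"
      by (simp add: fun_eq_iff)
    moreover have "T((i, j) := 0) \<in> standard_fillings D N"
      using T c(1) by (blast intro: standard_fillings_restrict)
    ultimately show "T \<in> ?ext ` {S \<in> standard_fillings D N. P (?ext S)}"
      using T by (metis (mono_tags, lifting) image_eqI mem_Collect_eq)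
  qed (use c standard_fillings_extend in auto)
  moreover have "inj_on ?ext (standard_fillings D N)"
  proof (rule inj_onI)
    fix S S' assume "S \<in> standard_fillings D N" "S' \<in> standard_fillings D N" "?ext S = ?ext S'"
    then show "S = S'"
      using standard_fillings_outside[of _ D N "(i, j)"] c(1) by (metis fun_upd_triv fun_upd_upd)
  qed
  ultimately show ?thesis
    by (simp add: card_image inj_on_subset)
qed

section \<open>Counting tableaux of two-row shapes\<close>

lemma mem_young_diagram_two_rows:
  "(i, j) \<in> young_diagram [a, b] \<longleftrightarrow> (i = 1 \<and> 1 \<le> j \<and> j \<le> a) \<or> (i = 2 \<and> 1 \<le> j \<and> j \<le> b)"
  unfolding young_diagram_def by (auto simp: nth_Cons')

lemma finite_young_diagram: "finite (young_diagram lam)"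
proof (rule finite_subset)
  show "young_diagram lam \<subseteq> {1..length lam} \<times> {1..sum_list lam}"
    unfolding young_diagram_def by (fastforce intro: le_trans[OF _ elem_le_sum_list])
qed simp

lemma young_diagram_Suc_first_row:
  "young_diagram [Suc a, b] = insert (1, Suc a) (young_diagram [a, b])"
  by (auto simp: mem_young_diagram_two_rows)

lemma young_diagram_Suc_second_row:
  "young_diagram [a, Suc b] = insert (2, Suc b) (young_diagram [a, b])"
  by (auto simp: mem_young_diagram_two_rows)

lemma two_rows_corner_cases:
  assumes "b \<le> a" "(i, j) \<in> young_diagram [a, b]"
    "(i, j + 1) \<notin> young_diagram [a, b]" "(i + 1, j) \<notin> young_diagram [a, b]"
  shows "(i, j) = (1, a) \<and> b < a \<or> (i, j) = (2, b) \<and> 0 < b"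
  using assms by (auto simp: mem_young_diagram_two_rows)

lemma card_SYT_max_at_corner:
  assumes lam: "young_diagram lam = insert (i, j) (young_diagram mu)"
    "sum_list lam = Suc (sum_list mu)"
    and c: "(i, j) \<notin> young_diagram mu" "(i, j + 1) \<notin> young_diagram mu"
    "(i + 1, j) \<notin> young_diagram mu"
    and P: "\<And>S. S (i, j) = 0 \<Longrightarrow> P (S((i, j) := sum_list lam)) \<longleftrightarrow> P S"
  shows "card {T \<in> SYT lam. T (i, j) = sum_list lam \<and> P T} = card {S \<in> SYT mu. P S}"
proof -
  have "card {T \<in> SYT lam. T (i, j) = sum_list lam \<and> P T}
      = card {S \<in> SYT mu. P (S((i, j) := sum_list lam))}"
    using card_standard_fillings_max_at[OF c, of "sum_list mu" P] lam
    by (simp add: SYT_eq_standard_fillings)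
  also have "\<dots> = card {S \<in> SYT mu. P S}"
    using P c(1) by (metis (no_types, lifting) SYT_eq_standard_fillings standard_fillings_outside)
  finally show ?thesis .
qed

lemma card_SYT_two_rows_split_max:
  assumes ba: "b \<le> a" and pos: "0 < a + b"
  shows "card {T \<in> SYT [a, b]. P T}
       = (if b < a then card {T \<in> SYT [a, b]. T (1, a) = a + b \<and> P T} else 0)
       + (if 0 < b then card {T \<in> SYT [a, b]. T (2, b) = a + b \<and> P T} else 0)"
proof -
  obtain N where N: "a + b = Suc N"
    using pos by (metis gr0_implies_Suc)
  let ?A1 = "if b < a then {T \<in> SYT [a, b]. T (1, a) = a + b \<and> P T} else {}"
  let ?A2 = "if 0 < b then {T \<in> SYT [a, b]. T (2, b) = a + b \<and> P T} else {}"
  have X: "SYT [a, b] = standard_fillings (young_diagram [a, b]) (Suc N)"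
    using N by (simp add: SYT_eq_standard_fillings)
  have "{T \<in> SYT [a, b]. P T} = ?A1 \<union> ?A2"
  proof (intro equalityI subsetI)
    fix T assume "T \<in> {T \<in> SYT [a, b]. P T}"
    then have T: "T \<in> standard_fillings (young_diagram [a, b]) (Suc N)" "P T"
      using X by auto
    obtain i j where "(i, j) \<in> young_diagram [a, b]" "T (i, j) = Suc N"
      "(i, j + 1) \<notin> young_diagram [a, b]" "(i + 1, j) \<notin> young_diagram [a, b]"
      using standard_fillings_max_cell[OF T(1)] .
    then have "T (i, j) = a + b" "(i, j) = (1, a) \<and> b < a \<or> (i, j) = (2, b) \<and> 0 < b"
      using two_rows_corner_cases[OF ba] N by auto
    with T X show "T \<in> ?A1 \<union> ?A2" by (elim disjE) auto
  qed (auto split: if_splits)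
  moreover have "?A1 \<inter> ?A2 = {}"
  proof -
    have distinct_corners: "T (1, a) \<noteq> T (2, b)" if "T \<in> SYT [a, b]" "b < a" "0 < b" for T
      using inj_onD[OF standard_fillings_inj_on, of T "young_diagram [a, b]" "Suc N" "(1, a)" "(2, b)"]
        that X by (auto simp: mem_young_diagram_two_rows)
    then show ?thesis by (auto dest: distinct_corners)
  qed
  moreover have "finite ?A1" "finite ?A2"
    using finite_standard_fillings[OF finite_young_diagram] X by auto
  ultimately show ?thesis
    by (simp add: card_Un_disjoint)
qed

lemma card_SYT_two_rows_rec:
  assumes ba: "b \<le> a" and pos: "0 < a + b"
    and P: "\<And>S c. S c = 0 \<Longrightarrow> P (S(c := a + b)) \<longleftrightarrow> P S"
  shows "card {T \<in> SYT [a, b]. P T}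
       = (if b < a then card {T \<in> SYT [a - 1, b]. P T} else 0)
       + (if 0 < b then card {T \<in> SYT [a, b - 1]. P T} else 0)"
proof -
  have "(if b < a then card {T \<in> SYT [a, b]. T (1, a) = a + b \<and> P T} else 0)
      = (if b < a then card {T \<in> SYT [a - 1, b]. P T} else 0)"
  proof (cases "b < a")
    case True
    then obtain a' where a': "a = Suc a'" by (metis Suc_pred gr_zeroI less_zeroE)
    have "card {T \<in> SYT [a, b]. T (1, a) = sum_list [a, b] \<and> P T} = card {T \<in> SYT [a', b]. P T}"
      using True a' P by (intro card_SYT_max_at_corner)
        (auto simp: young_diagram_Suc_first_row mem_young_diagram_two_rows)
    then show ?thesis using True a' by simp
  qed simp
  moreover have "(if 0 < b then card {T \<in> SYT [a, b]. T (2, b) = a + b \<and> P T} else 0)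
      = (if 0 < b then card {T \<in> SYT [a, b - 1]. P T} else 0)"
  proof (cases "0 < b")
    case True
    then obtain b' where b': "b = Suc b'" by (metis Suc_pred)
    have "card {T \<in> SYT [a, b]. T (2, b) = sum_list [a, b] \<and> P T} = card {T \<in> SYT [a, b']. P T}"
      using True b' P by (intro card_SYT_max_at_corner)
        (auto simp: young_diagram_Suc_second_row mem_young_diagram_two_rows)
    then show ?thesis using True b' by simp
  qed simp
  ultimately show ?thesis
    by (simp only: card_SYT_two_rows_split_max[OF ba pos, of P])
qed

section \<open>Ballot numbers\<close>

text \<open>Extending by 0 to negative lower indices makes Pascal's rule and symmetry unconditional.\<close>

definition binomial_int :: "nat \<Rightarrow> int \<Rightarrow> int" where
  "binomial_int m k = (if k < 0 then 0 else int (m choose nat k))"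

lemma binomial_int_Suc: "binomial_int (Suc m) k = binomial_int m k + binomial_int m (k - 1)"
proof (cases "k \<le> 0")
  case False
  then have "nat k = Suc (nat (k - 1))"
    by linarith
  then show ?thesis
    using False by (simp add: binomial_int_def)
qed (auto simp: binomial_int_def)

lemma binomial_int_symmetric: "binomial_int m k = binomial_int m (int m - k)"
proof (cases "0 \<le> k \<and> k \<le> int m")
  case True
  then obtain j where "k = int j" "j \<le> m"
    by (metis nat_0_le nat_le_iff)
  moreover from this have "nat (int m - k) = m - j"
    by linarith
  ultimately show ?thesis
    by (simp add: binomial_int_def binomial_symmetric[of j m, symmetric])
qed (auto simp: binomial_int_def)

text \<open>By the reflection principle, ballot s a b counts the SYT of shape (a, b) whose first row
  begins with 1, ..., s; this is proved below for s = 0 and s = 3.\<close>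

definition ballot :: "nat \<Rightarrow> nat \<Rightarrow> nat \<Rightarrow> int" where
  "ballot s a b = binomial_int (a + b - s) (int b) - binomial_int (a + b - s) (int b - int s - 1)"

lemma ballot_rec:
  assumes "b \<le> a" "s < a + b"
  shows "ballot s a b = (if b < a then ballot s (a - 1) b else 0) + (if 0 < b then ballot s a (b - 1) else 0)"
proof -
  obtain m where m: "a + b - s = Suc m"
    using assms by (metis Suc_diff_Suc)
  have "ballot s a b = (binomial_int m (int b) - binomial_int m (int b - int s - 1))
      + (binomial_int m (int b - 1) - binomial_int m (int b - int s - 2))"
    unfolding ballot_def m binomial_int_Suc by (simp add: algebra_simps)
  moreover have "(if b < a then ballot s (a - 1) b else 0)
      = binomial_int m (int b) - binomial_int m (int b - int s - 1)"
  proof (cases "b < a")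
    case False
    \<comment> \<open>b = a: the term vanishes by symmetry\<close>
    then have "int b - int s - 1 = int m - int b"
      using m assms by linarith
    then have "binomial_int m (int b) = binomial_int m (int b - int s - 1)"
      by (simp only: binomial_int_symmetric[of m "int b"])
    then show ?thesis using False by simp
  next
    case True
    then have "a - 1 + b - s = m"
      using m by linarith
    then show ?thesis using True by (simp add: ballot_def)
  qed
  moreover have "(if 0 < b then ballot s a (b - 1) else 0)
      = binomial_int m (int b - 1) - binomial_int m (int b - int s - 2)"
  proof (cases "0 < b")
    case True
    then have "a + (b - 1) - s = m" "int (b - 1) = int b - 1"
      using m by linarith+
    then show ?thesis using True by (simp add: ballot_def algebra_simps)
  qed (simp add: binomial_int_def)
  ultimately show ?thesis by simp
qed

lemma card_SYT_two_rows_eq_ballot: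
  assumes base: "\<And>a b. b \<le> a \<Longrightarrow> a + b = s \<Longrightarrow> int (card {T \<in> SYT [a, b]. P T}) = ballot s a b"
    and P: "\<And>a b S c. b \<le> a \<Longrightarrow> s < a + b \<Longrightarrow> S c = 0 \<Longrightarrow> P (S(c := a + b)) \<longleftrightarrow> P S"
    and "b \<le> a" "s \<le> a + b"
  shows "int (card {T \<in> SYT [a, b]. P T}) = ballot s a b"
  using assms(3,4)
proof (induction "a + b" arbitrary: a b rule: less_induct)
  case less
  show ?case
  proof (cases "a + b = s")
    case True
    with base less.prems show ?thesis by blast
  next
    case False
    then have s: "s < a + b" using less.prems by simp
    have "b < a \<Longrightarrow> int (card {T \<in> SYT [a - 1, b]. P T}) = ballot s (a - 1) b"
      using s by (intro less.hyps) auto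
    moreover have "0 < b \<Longrightarrow> int (card {T \<in> SYT [a, b - 1]. P T}) = ballot s a (b - 1)"
      using s less.prems by (intro less.hyps) auto
    ultimately show ?thesis
      using card_SYT_two_rows_rec[OF less.prems(1), of P] P[OF less.prems(1) s]
        ballot_rec[OF less.prems(1) s] s by auto
  qed
qed

lemma card_SYT_two_rows: "b \<le> a \<Longrightarrow> int (card (SYT [a, b])) = ballot 0 a b"
proof -
  have "young_diagram [0, 0] = {}"
    by (auto simp: mem_young_diagram_two_rows)
  then have "SYT [0, 0] = {\<lambda>_. 0}"
    by (auto simp: SYT_def bij_betw_def)
  then have "int (card {T \<in> SYT [a, b]. True}) = ballot 0 a b" if "b \<le> a" "a + b = 0" for a b
    using that by (simp add: ballot_def binomial_int_def)
  then show "b \<le> a \<Longrightarrow> int (card (SYT [a, b])) = ballot 0 a b"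
    using card_SYT_two_rows_eq_ballot[of 0 "\<lambda>_. True" b a] by simp
qed

lemma card_SYT_two_rows_start_123:
  "b \<le> a \<Longrightarrow> 3 \<le> a + b \<Longrightarrow> int (card {T \<in> SYT [a, b]. T (1, 3) = 3}) = ballot 3 a b"
proof (rule card_SYT_two_rows_eq_ballot)
  fix a b :: nat
  assume ab: "b \<le> a" "a + b = 3"
  then consider "a = 3" "b = 0" | "a = 2" "b = 1" by linarith
  then show "int (card {T \<in> SYT [a, b]. T (1, 3) = 3}) = ballot 3 a b"
  proof cases
    case 1
    have "T (1, 3) = 3" if "T \<in> SYT [3, 0]" for T
    proof -
      from that have "T \<in> standard_fillings (young_diagram [3, 0]) (Suc 2)"
        by (simp add: SYT_eq_standard_fillings)
      then obtain i j where "(i, j) \<in> young_diagram [3, 0]" "T (i, j) = 3"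
        "(i, j + 1) \<notin> young_diagram [3, 0]" "(i + 1, j) \<notin> young_diagram [3, 0]"
        by (rule standard_fillings_max_cell) simp
      with two_rows_corner_cases[of 0 3 i j] show ?thesis by auto
    qed
    then have "{T \<in> SYT [3, 0]. T (1, 3) = 3} = SYT [3, 0]"
      by blast
    then show ?thesis
      using 1 card_SYT_two_rows[of 0 3] by (simp add: ballot_def binomial_int_def)
  next
    case 2
    have "T (1, 3) = 0" if "T \<in> SYT [2, 1]" for T
      using that by (simp add: SYT_def mem_young_diagram_two_rows)
    then have none: "{T \<in> SYT [2, 1]. T (1, 3) = 3} = {}"
      by force
    show ?thesis
      unfolding 2 none by (simp add: ballot_def binomial_int_def)
  qed
qed auto

lemma Suc_times_binomial_Suc: "Suc k * (m choose Suc k) = (m - k) * (m choose k)"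
  by (simp only: binomial_absorption binomial_absorb_comp)

lemma ballot_zero_diagonal: "(int n + 1) * ballot 0 n n = int (2 * n choose n)"
proof (cases "n = 0")
  case True
  then show ?thesis by (simp add: ballot_def binomial_int_def)
next
  case False
  then have n: "1 \<le> n" by simp
  define C C' where "C = 2 * n choose n" and "C' = 2 * n choose (n - 1)"
  have "n * C = (n + 1) * C'"
    using Suc_times_binomial_Suc[of "n - 1" "2 * n"] n by (simp add: C_def C'_def)
  from arg_cong[OF this, of int] have C': "(int n + 1) * int C' = int n * int C"
    by (simp add: algebra_simps)
  have "ballot 0 n n = int C - int C'"
    using n by (simp add: ballot_def binomial_int_def nat_diff_distrib mult_2 C_def C'_def)
  then have "(int n + 1) * ballot 0 n n = (int n + 1) * int C - (int n + 1) * int C'"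
    by (simp add: right_diff_distrib)
  also have "\<dots> = int C"
    unfolding C' by (simp add: algebra_simps)
  finally show ?thesis
    unfolding C_def .
qed

lemma ballot_three_diagonal:
  assumes "3 \<le> n" shows "(int n + 1) * ballot 3 n n = 4 * int (2 * n - 3 choose n)"
proof -
  define C C' where "C = 2 * n - 3 choose n" and "C' = 2 * n - 3 choose (n + 1)"
  have "binomial_int (2 * n - 3) (int n - 4) = binomial_int (2 * n - 3) (int n + 1)"
    using binomial_int_symmetric[of "2 * n - 3" "int n - 4"] assms by (simp add: of_nat_diff)
  then have "ballot 3 n n = int C - int C'"
    by (simp add: ballot_def binomial_int_def mult_2 nat_add_distrib C_def C'_def)
  then have "(int n + 1) * ballot 3 n n = (int n + 1) * int C - (int n + 1) * int C'"
    by (simp add: right_diff_distrib)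
  moreover have "(n + 1) * C' = (n - 3) * C"
    using Suc_times_binomial_Suc[of n "2 * n - 3"] assms by (simp add: C_def C'_def)
  from arg_cong[OF this, of int] have C': "(int n + 1) * int C' = (int n - 3) * int C"
    using assms by (simp add: of_nat_diff algebra_simps)
  ultimately show ?thesis
    unfolding C' C_def[symmetric] by (simp add: algebra_simps)
qed

lemma central_binomial_descend3:
  assumes "3 \<le> n" shows "(n - 2) * (2 * n choose n) = 4 * (2 * n - 1) * (2 * n - 3 choose n)"
proof -
  obtain k where n: "n = k + 3" using assms by (metis add.commute le_iff_add)
  define A B C E where "A = 2 * k + 6 choose (k + 3)" and "B = 2 * k + 5 choose (k + 3)"
    and "C = 2 * k + 4 choose (k + 3)" and "E = 2 * k + 3 choose (k + 3)"
  have "(k + 3) * A = (k + 3) * (2 * B)"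
    using binomial_absorb_comp[of "2 * k + 6" "k + 3"] by (simp add: A_def B_def algebra_simps)
  then have A: "A = 2 * B"
    by simp
  have B: "(k + 2) * B = (2 * k + 5) * C"
    using binomial_absorb_comp[of "2 * k + 5" "k + 3"] by (simp add: B_def C_def algebra_simps)
  have C: "(k + 1) * C = (2 * k + 4) * E"
    using binomial_absorb_comp[of "2 * k + 4" "k + 3"] by (simp add: C_def E_def algebra_simps)
  have "(k + 2) * ((k + 1) * B) = (k + 1) * ((k + 2) * B)"
    by (rule mult.left_commute)
  also have "\<dots> = (2 * k + 5) * ((k + 1) * C)"
    by (subst B) (rule mult.left_commute)
  also have "\<dots> = (k + 2) * (2 * (2 * k + 5) * E)"
    unfolding C by (simp add: algebra_simps)
  finally have "(k + 1) * B = 2 * (2 * k + 5) * E"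
    by (simp only: mult_cancel_left) simp
  then have "(k + 1) * A = 4 * (2 * k + 5) * E"
    unfolding A by (simp add: algebra_simps)
  then show ?thesis
    unfolding n A_def E_def by (simp add: algebra_simps)
qed

section \<open>The shape (n, n)\<close>

lemma SYT_square_later_iff_start_123:
  assumes n: "3 \<le> n" and T: "T \<in> SYT [n, n]"
  shows "T (1, 3) < T (2, 1) \<longleftrightarrow> T (1, 3) = 3"
proof -
  let ?D = "young_diagram [n, n]"
  let ?below = "{d \<in> ?D. T d \<le> T (1, 3)}"
  have T': "T \<in> standard_fillings ?D (2 * n)"
    using T by (simp add: SYT_eq_standard_fillings mult_2)
  have cells: "(i, j) \<in> ?D \<longleftrightarrow> (i = 1 \<or> i = 2) \<and> 1 \<le> j \<and> j \<le> n" for i j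
    by (auto simp: mem_young_diagram_two_rows)
  have row_less: "T (i, j) < T (i, k)" if "i = 1 \<or> i = 2" "1 \<le> j" "j < k" "k \<le> n" for i j k
    using standard_fillings_row_less[OF T', of j k i] that cells by simp
  have card_below: "T (1, 3) = card ?below"
    using standard_fillings_value_eq_card[OF T'] n cells by simp
  have first3: "{(1, 1), (1, 2), (1, 3)} \<subseteq> ?below"
    using n cells row_less[of 1 1 3] row_less[of 1 2 3] by auto
  show ?thesis
  proof
    assume later: "T (1, 3) < T (2, 1)"
    have "?below \<subseteq> {(1, 1), (1, 2), (1, 3)}"
    proof
      fix d assume d: "d \<in> ?below"
      obtain i j where ij: "d = (i, j)" by force
      have "T (1, 3) < T (i, j)" if "i = 1" "3 < j"
        using that d ij cells row_less[of 1 3 j] by auto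
      moreover have "T (1, 3) < T (i, j)" if "i = 2"
        using that d ij cells later row_less[of 2 1 j] by (cases "j = 1") auto
      ultimately show "d \<in> {(1, 1), (1, 2), (1, 3)}"
        using d ij cells by fastforce
    qed
    with first3 have "?below = {(1, 1), (1, 2), (1, 3)}"
      by blast
    then show "T (1, 3) = 3"
      using card_below by simp
  next
    assume start: "T (1, 3) = 3"
    show "T (1, 3) < T (2, 1)"
    proof (rule ccontr)
      assume "\<not> T (1, 3) < T (2, 1)"
      then have "insert (2, 1) {(1, 1), (1, 2), (1, 3)} \<subseteq> ?below"
        using first3 n cells by auto
      moreover have "finite ?below"
        by (simp add: finite_young_diagram)
      ultimately have "card (insert (2, 1) {(1, 1), (1, 2), (1, 3)} :: (nat \<times> nat) set) \<le> card ?below"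
        by (rule card_mono[rotated])
      then have "4 \<le> card ?below"
        by simp
      then show False
        using start card_below by simp
    qed
  qed
qed

lemma card_SYT_square: "(real n + 1) * real (card (SYT [n, n])) = real (2 * n choose n)"
proof -
  have "(int n + 1) * int (card (SYT [n, n])) = int (2 * n choose n)"
    using ballot_zero_diagonal[of n] card_SYT_two_rows[of n n] by simp
  from arg_cong[OF this, of real_of_int] show ?thesis
    by simp
qed

lemma card_SYT_square_start_123:
  assumes "3 \<le> n"
  shows "(real n + 1) * real (card {T \<in> SYT [n, n]. T (1, 3) = 3}) = 4 * real (2 * n - 3 choose n)"
proof -
  have "(int n + 1) * int (card {T \<in> SYT [n, n]. T (1, 3) = 3}) = 4 * int (2 * n - 3 choose n)"
    using ballot_three_diagonal[OF assms] card_SYT_two_rows_start_123[of n n] assms by simp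
  from arg_cong[OF this, of real_of_int] show ?thesis
    by simp
qed

lemma card_SYT_square_start_123_ratio:
  assumes n: "3 \<le> n"
  shows "real (card {T \<in> SYT [n, n]. T (1, 3) = 3}) * (2 * real n - 1)
       = real (card (SYT [n, n])) * (real n - 2)"
proof -
  define S V where "S = real (card (SYT [n, n]))"
    and "V = real (card {T \<in> SYT [n, n]. T (1, 3) = 3})"
  have "(real n + 1) * (V * (2 * real n - 1)) = ((real n + 1) * V) * (2 * real n - 1)"
    by (rule mult.assoc[symmetric])
  also have "\<dots> = 4 * (2 * real n - 1) * real (2 * n - 3 choose n)"
    unfolding V_def card_SYT_square_start_123[OF n] by (simp add: ac_simps)
  also have "\<dots> = (real n - 2) * real (2 * n choose n)"
    using arg_cong[OF central_binomial_descend3[OF n], of real] n by (simp add: of_nat_diff)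
  also have "\<dots> = (real n + 1) * (S * (real n - 2))"
    using card_SYT_square[of n] unfolding S_def by (simp add: algebra_simps)
  finally show ?thesis
    unfolding S_def V_def by simp
qed

lemma SP_square_1_3_2_1:
  assumes n: "3 \<le> n"
  shows "SP [n, n] (1, 3) (2, 1) = 3 / (2 * real n - 1)"
proof -
  let ?S = "SYT [n, n]"
  let ?V = "{T \<in> ?S. T (1, 3) = 3}"
  have later: "{T \<in> ?S. T (2, 1) > T (1, 3)} = ?V"
    using SYT_square_later_iff_start_123[OF n] by blast
  have distinct: "T (1, 3) \<noteq> T (2, 1)" if "T \<in> ?S" for T
    using that n standard_fillings_inj_on[of T "young_diagram [n, n]" "2 * n"]
    by (auto simp: SYT_eq_standard_fillings mult_2 mem_young_diagram_two_rows dest: inj_onD)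
  then have "T (2, 1) < T (1, 3) \<longleftrightarrow> T (1, 3) \<noteq> 3" if "T \<in> ?S" for T
    using SYT_square_later_iff_start_123[OF n that] distinct[OF that] by linarith
  then have earlier: "{T \<in> ?S. T (1, 3) > T (2, 1)} = ?S - ?V"
    by blast
  have fin: "finite ?S"
    by (simp add: SYT_eq_standard_fillings finite_standard_fillings finite_young_diagram)
  have "(real n + 1) * real (card ?S) > 0"
    using card_SYT_square[of n] by simp
  then have pos: "real (card ?S) > 0"
    by (simp add: zero_less_mult_iff)
  have "SP [n, n] (1, 3) (2, 1) = (real (card ?S) - 2 * real (card ?V)) / real (card ?S)"
    unfolding SP_def later earlier using fin by (simp add: card_Diff_subset of_nat_diff card_mono)
  also have "\<dots> = 3 / (2 * real n - 1)"
    using card_SYT_square_start_123_ratio[OF n] pos n by (simp add: field_simps)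
  finally show ?thesis .
qed

lemma three_over_odd_expansion:
  fixes x :: real
  assumes "1 \<le> x"
  shows "\<bar>3 / (2 * x - 1) - (3/2 * (1 / x) + 3/4 * (1 / x ^ 2) + 3/8 * (1 / x ^ 3))\<bar>
       \<le> 3/8 * \<bar>1 / x ^ 4\<bar>"
proof -
  have pos: "0 < 2 * x - 1" "0 < x" using assms by auto
  have "3 / (2 * x - 1) - (3/2 * (1 / x) + 3/4 * (1 / x ^ 2) + 3/8 * (1 / x ^ 3))
      = 3 / (8 * x ^ 3 * (2 * x - 1))"
    using pos by (simp add: field_simps power2_eq_square power3_eq_cube)
  moreover have "0 \<le> 3 / (8 * x ^ 3 * (2 * x - 1))"
    using pos by simp
  moreover have "3 / (8 * x ^ 3 * (2 * x - 1)) \<le> 3 / (8 * x ^ 3 * x)"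
    using pos assms by (intro divide_left_mono mult_left_mono) auto
  moreover have "3 / (8 * x ^ 3 * x) = 3/8 * \<bar>1 / x ^ 4\<bar>"
    using pos by (simp add: power4_eq_xxxx power3_eq_cube)
  ultimately show ?thesis
    by simp
qed

lemma three_over_odd_expansion_bigo:
  "(\<lambda>n::nat. 3 / (2 * real n - 1)
      - (3/2 * (1 / real n) + 3/4 * (1 / real n ^ 2) + 3/8 * (1 / real n ^ 3)))
    \<in> O(\<lambda>n. 1 / real n ^ 4)"
proof (rule bigoI[where c = "3/8"], rule eventually_mono[OF eventually_ge_at_top[of 1]])
  fix n :: nat assume "1 \<le> n"
  then show "norm (3 / (2 * real n - 1)
        - (3/2 * (1 / real n) + 3/4 * (1 / real n ^ 2) + 3/8 * (1 / real n ^ 3)))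
      \<le> 3/8 * norm (1 / real n ^ 4)"
    using three_over_odd_expansion[of "real n"] by simp
qed

lemma min_abs_SP_square_bigo:
  "(\<lambda>n::nat. Min {\<bar>SP [n, n] c1 c2\<bar> | c1 c2.
      c1 \<in> young_diagram [n, n] \<and> c2 \<in> young_diagram [n, n] \<and> c1 \<noteq> c2})
    \<in> O(\<lambda>n. 1 / real n)"
proof (rule bigoI[where c = 3], rule eventually_mono[OF eventually_ge_at_top[of 3]])
  fix n :: nat assume n: "3 \<le> n"
  let ?M = "{\<bar>SP [n, n] c1 c2\<bar> | c1 c2.
      c1 \<in> young_diagram [n, n] \<and> c2 \<in> young_diagram [n, n] \<and> c1 \<noteq> c2}"
  have "?M \<subseteq> (\<lambda>(c1, c2). \<bar>SP [n, n] c1 c2\<bar>) ` (young_diagram [n, n] \<times> young_diagram [n, n])"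
    by auto
  then have fin: "finite ?M"
    by (rule finite_subset) (simp add: finite_young_diagram)
  have "(1, 3) \<in> young_diagram [n, n]" "(2, 1) \<in> young_diagram [n, n]"
    using n by (auto simp: mem_young_diagram_two_rows)
  then have mem: "\<bar>SP [n, n] (1, 3) (2, 1)\<bar> \<in> ?M"
    by force
  have "Min ?M \<le> 3 / (2 * real n - 1)"
    using Min_le[OF fin mem] SP_square_1_3_2_1[OF n] n by simp
  also have "\<dots> \<le> 3 / real n"
    using n by (intro divide_left_mono) auto
  finally have "Min ?M \<le> 3 / real n" .
  moreover have "0 \<le> Min ?M"
    using Min_in[OF fin] mem by fastforce
  ultimately show "norm (Min ?M) \<le> 3 * norm (1 / real n)"
    by simp
qed

theorem mainTheorem1:
  shows "(\<forall>n::nat. n \<ge> 3 \<longrightarrow> SP [n, n] (1, 3) (2, 1) = 3 / (2 * real n - 1))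
    \<and> (\<lambda>n::nat. 3 / (2 * real n - 1)
          - (3/2 * (1 / real n) + 3/4 * (1 / real n ^ 2) + 3/8 * (1 / real n ^ 3)))
        \<in> O(\<lambda>n. 1 / real n ^ 4)
    \<and> (\<lambda>n::nat. Min {\<bar>SP [n, n] c1 c2\<bar> | c1 c2.
            c1 \<in> young_diagram [n, n] \<and> c2 \<in> young_diagram [n, n] \<and> c1 \<noteq> c2})
        \<in> O(\<lambda>n. 1 / real n)"
  using SP_square_1_3_2_1 three_over_odd_expansion_bigo min_abs_SP_square_bigo by blast

end
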